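(* Let $\theta$ be a real antisymmetric $N\times N$ matrix. For every unitary $U\in\mathbb{M}_n(\mathcal{A}_\theta^\infty)$ there exists a permutation $\rho\in\sigma_n$ such that the entry $U_{i\rho(i)}$ is non-zero for all $i=1,\dots,n$.
   Context: $\mathcal{A}_\theta$ is the universal $C^*$-algebra generated by unitaries $u_1,\dots,u_N$ with $u_ku_l=\exp(2\pi i\theta_{kl})u_lu_k$, and $\mathcal{A}_\theta^\infty$ is the smooth subalgebra consisting of elements $a$ for which $z\mapsto\sigma_z(a)$ is smooth, where $\sigma_z(u^\alpha)=z^\alpha u^\alpha$ for $z\in\mathbb{T}^N$. $\sigma_n$ is the symmetric group on $\{1,\dots,n\}$. *)

theory Defs
  imports "HOL-Analysis.Analysis" "HOL-Combinatorics.Permutations"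
begin

text \<open>Model of the smooth noncommutative torus: an element a = sum_alpha a_alpha u^alpha
  of A_theta^infty is identified with its Fourier coefficient sequence on Z^N,
  which is rapidly decreasing. Multi-indices are functions nat => int vanishing
  outside {0..<N}; u^alpha = u_1^(alpha_1) ... u_N^(alpha_N) (0-based indices here).\<close>

type_synonym mindex = "nat \<Rightarrow> int"

definition ZN :: "nat \<Rightarrow> mindex set" where
  "ZN N = {\<alpha>. \<forall>k\<ge>N. \<alpha> k = 0}"

text \<open>u^alpha u^beta = cocyc alpha beta * u^(alpha+beta), using u_k u_l = e(theta_kl) u_l u_k.\<close>
definition cocyc :: "nat \<Rightarrow> (nat \<Rightarrow> nat \<Rightarrow> real) \<Rightarrow> mindex \<Rightarrow> mindex \<Rightarrow> complex" where
  "cocyc N \<theta> \<alpha> \<beta> =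
     exp (2 * of_real pi * \<i> * of_real (\<Sum>k<N. \<Sum>l<k. of_int (\<alpha> k) * of_int (\<beta> l) * \<theta> k l))"

definition smooth_elem :: "nat \<Rightarrow> (mindex \<Rightarrow> complex) \<Rightarrow> bool" where
  "smooth_elem N a \<longleftrightarrow> (\<forall>\<alpha>. \<alpha> \<notin> ZN N \<longrightarrow> a \<alpha> = 0) \<and>
     (\<forall>m::nat. \<exists>C. \<forall>\<alpha>\<in>ZN N. (1 + real (\<Sum>k<N. nat \<bar>\<alpha> k\<bar>)) ^ m * cmod (a \<alpha>) \<le> C)"

definition nct_mult :: "nat \<Rightarrow> (nat \<Rightarrow> nat \<Rightarrow> real) \<Rightarrow> (mindex \<Rightarrow> complex) \<Rightarrow> (mindex \<Rightarrow> complex) \<Rightarrow> (mindex \<Rightarrow> complex)" where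
  "nct_mult N \<theta> a b = (\<lambda>\<gamma>. \<Sum>\<^sub>\<infinity>\<alpha>\<in>ZN N. a \<alpha> * b (\<lambda>k. \<gamma> k - \<alpha> k) * cocyc N \<theta> \<alpha> (\<lambda>k. \<gamma> k - \<alpha> k))"

text \<open>(u^alpha)^* = cocyc alpha alpha * u^(-alpha).\<close>
definition nct_star :: "nat \<Rightarrow> (nat \<Rightarrow> nat \<Rightarrow> real) \<Rightarrow> (mindex \<Rightarrow> complex) \<Rightarrow> (mindex \<Rightarrow> complex)" where
  "nct_star N \<theta> a = (\<lambda>\<beta>. cnj (a (\<lambda>k. - \<beta> k)) * cocyc N \<theta> \<beta> \<beta>)"

definition nct_one :: "mindex \<Rightarrow> complex" where
  "nct_one = (\<lambda>\<alpha>. if \<alpha> = (\<lambda>_. 0) then 1 else 0)"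

definition nct_zero :: "mindex \<Rightarrow> complex" where
  "nct_zero = (\<lambda>_. 0)"

type_synonym nct_matrix = "nat \<Rightarrow> nat \<Rightarrow> (mindex \<Rightarrow> complex)"

definition mat_mult :: "nat \<Rightarrow> (nat \<Rightarrow> nat \<Rightarrow> real) \<Rightarrow> nat \<Rightarrow> nct_matrix \<Rightarrow> nct_matrix \<Rightarrow> nct_matrix" where
  "mat_mult N \<theta> n A B = (\<lambda>i j \<gamma>. \<Sum>k<n. nct_mult N \<theta> (A i k) (B k j) \<gamma>)"

definition mat_star :: "nat \<Rightarrow> (nat \<Rightarrow> nat \<Rightarrow> real) \<Rightarrow> nct_matrix \<Rightarrow> nct_matrix" where
  "mat_star N \<theta> A = (\<lambda>i j. nct_star N \<theta> (A j i))"

definition mat_id :: nct_matrix where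
  "mat_id = (\<lambda>i j. if i = j then nct_one else nct_zero)"

definition smooth_unitary :: "nat \<Rightarrow> (nat \<Rightarrow> nat \<Rightarrow> real) \<Rightarrow> nat \<Rightarrow> nct_matrix \<Rightarrow> bool" where
  "smooth_unitary N \<theta> n U \<longleftrightarrow>
     (\<forall>i<n. \<forall>j<n. smooth_elem N (U i j)) \<and>
     (\<forall>i<n. \<forall>j<n. mat_mult N \<theta> n (mat_star N \<theta> U) U i j = mat_id i j) \<and>
     (\<forall>i<n. \<forall>j<n. mat_mult N \<theta> n U (mat_star N \<theta> U) i j = mat_id i j)"

end

theory Submission
  imports Defs
begin

text \<open>Let \<open>\<tau>\<close> be the trace of the noncommutative torus, i.e. the coefficient at \<open>u\<^sup>0\<close>.
  For a unitary \<open>U\<close> the numbers \<open>P\<^sub>i\<^sub>j = \<tau>(U\<^sub>i\<^sub>j U\<^sub>i\<^sub>j\<^sup>*) = \<tau>(U\<^sub>i\<^sub>j\<^sup>* U\<^sub>i\<^sub>j)\<close>, the squared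
  \<open>\<ell>\<^sup>2\<close>-norms of the coefficient sequences, form a doubly stochastic matrix, since the diagonal
  entries of \<open>U U\<^sup>*\<close> and \<open>U\<^sup>* U\<close> are \<open>1\<close>. Counting mass shows that the support of a doubly
  stochastic matrix satisfies Hall's condition, so by the marriage theorem it contains a
  permutation; entries of positive norm are nonzero.\<close>

definition hall_condition :: "'i set \<Rightarrow> ('i \<Rightarrow> 'a set) \<Rightarrow> bool" where
  "hall_condition I A \<longleftrightarrow> (\<forall>S\<subseteq>I. card S \<le> card (\<Union> (A ` S)))"

lemma inj_on_if_Un:
  assumes "inj_on f S" and "inj_on g T" and "f ` S \<inter> g ` (T - S) = {}"
  shows "inj_on (\<lambda>i. if i \<in> S then f i else g i) (S \<union> T)"
proof (rule inj_onI)
  fix a b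
  assume "a \<in> S \<union> T" "b \<in> S \<union> T"
    and "(if a \<in> S then f a else g a) = (if b \<in> S then f b else g b)"
  with assms show "a = b"
    by (cases "a \<in> S"; cases "b \<in> S") (auto dest: inj_onD)
qed

lemma hall_condition_remove_element:
  assumes hall: "hall_condition I A" and i0: "i0 \<in> I"
    and no_critical: "\<And>S. S \<noteq> {} \<Longrightarrow> S \<subset> I \<Longrightarrow> card S < card (\<Union> (A ` S))"
  shows "hall_condition (I - {i0}) (\<lambda>i. A i - {x})"
  unfolding hall_condition_def
proof (intro allI impI)
  fix S assume S: "S \<subseteq> I - {i0}"
  show "card S \<le> card (\<Union> ((\<lambda>i. A i - {x}) ` S))"
  proof (cases "S = {}")
    case False
    with S i0 have "card S < card (\<Union> (A ` S))"
      by (intro no_critical) auto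
    moreover have "card (\<Union> (A ` S)) - 1 \<le> card (\<Union> (A ` S) - {x})"
      using diff_card_le_card_Diff[of "{x}" "\<Union> (A ` S)"] by simp
    moreover have "\<Union> ((\<lambda>i. A i - {x}) ` S) = \<Union> (A ` S) - {x}" by auto
    ultimately show ?thesis by simp
  qed simp
qed

lemma hall_condition_remove_critical:
  assumes hall: "hall_condition I A" and "finite I" and "S \<subseteq> I"
    and critical: "card S = card (\<Union> (A ` S))" and "finite (\<Union> (A ` S))"
  shows "hall_condition (I - S) (\<lambda>i. A i - \<Union> (A ` S))"
  unfolding hall_condition_def
proof (intro allI impI)
  fix T assume T: "T \<subseteq> I - S"
  have "card T + card S = card (T \<union> S)"
    using T assms(2,3) by (subst card_Un_disjoint) (auto dest: finite_subset)
  also have "\<dots> \<le> card (\<Union> (A ` (T \<union> S)))"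
    using hall T assms(3) unfolding hall_condition_def
    by (meson Diff_subset le_sup_iff subset_trans)
  also have "\<dots> \<le> card (\<Union> (A ` (T \<union> S)) - \<Union> (A ` S)) + card (\<Union> (A ` S))"
    using diff_card_le_card_Diff[OF assms(5), of "\<Union> (A ` (T \<union> S))"] by linarith
  also have "\<Union> (A ` (T \<union> S)) - \<Union> (A ` S) = \<Union> ((\<lambda>i. A i - \<Union> (A ` S)) ` T)" by auto
  finally show "card T \<le> card (\<Union> ((\<lambda>i. A i - \<Union> (A ` S)) ` T))"
    using critical by linarith
qed

theorem hall_marriage:
  assumes "finite I" and "hall_condition I A"
  shows "\<exists>f. inj_on f I \<and> (\<forall>i\<in>I. f i \<in> A i)"
  using assms
proof (induction "card I" arbitrary: I A rule: less_induct)
  case less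
  note fin = less.prems(1) and hall = less.prems(2)
  show ?case
  proof (cases "\<exists>S. S \<noteq> {} \<and> S \<subset> I \<and> card S = card (\<Union> (A ` S))")
    case False
    then have no_critical: "\<And>S. S \<noteq> {} \<Longrightarrow> S \<subset> I \<Longrightarrow> card S < card (\<Union> (A ` S))"
      using hall unfolding hall_condition_def by (meson le_neq_implies_less psubset_imp_subset)
    show ?thesis
    proof (cases "I = {}")
      case False
      then obtain i0 where i0: "i0 \<in> I" by auto
      then have "card {i0} \<le> card (\<Union> (A ` {i0}))"
        using hall unfolding hall_condition_def by blast
      then obtain x where x: "x \<in> A i0"
        by fastforce
      have "card (I - {i0}) < card I"
        using fin i0 by (rule card_Diff1_less)
      moreover have "hall_condition (I - {i0}) (\<lambda>i. A i - {x})"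
        using hall i0 no_critical by (rule hall_condition_remove_element)
      ultimately obtain g where g: "inj_on g (I - {i0})" "\<forall>i\<in>I - {i0}. g i \<in> A i - {x}"
        using less.hyps fin by blast
      have "inj_on (\<lambda>i. if i \<in> {i0} then x else g i) ({i0} \<union> (I - {i0}))"
        using g by (intro inj_on_if_Un) auto
      with g x i0 show ?thesis
        by (intro exI[of _ "\<lambda>i. if i \<in> {i0} then x else g i"]) (auto simp: insert_absorb)
    qed simp
  next
    case True
    then obtain S where S: "S \<noteq> {}" "S \<subset> I" and critical: "card S = card (\<Union> (A ` S))"
      by blast
    have finS: "finite S"
      using S fin finite_subset by blast
    have fin_image: "finite (\<Union> (A ` S))"
      using S finS critical by (metis card_eq_0_iff)
    have "card S < card I"
      by (rule psubset_card_mono[OF fin S(2)])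
    moreover have "hall_condition S A"
      using hall S unfolding hall_condition_def by auto
    ultimately obtain f where f: "inj_on f S" "\<forall>i\<in>S. f i \<in> A i"
      using less.hyps finS by blast
    have "card (I - S) < card I"
      using S fin by (intro psubset_card_mono) auto
    moreover have "hall_condition (I - S) (\<lambda>i. A i - \<Union> (A ` S))"
      using hall fin S(2) critical fin_image by (intro hall_condition_remove_critical) auto
    ultimately obtain g where g: "inj_on g (I - S)" "\<forall>i\<in>I - S. g i \<in> A i - \<Union> (A ` S)"
      using less.hyps fin by blast
    have "inj_on (\<lambda>i. if i \<in> S then f i else g i) (S \<union> (I - S))"
      using f g by (intro inj_on_if_Un) auto
    with f g S show ?thesis
      by (intro exI[of _ "\<lambda>i. if i \<in> S then f i else g i"]) (auto simp: Un_absorb1)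
  qed
qed

lemma doubly_stochastic_hall_condition:
  fixes P :: "nat \<Rightarrow> nat \<Rightarrow> real"
  assumes nonneg: "\<And>i j. 0 \<le> P i j"
    and rows: "\<And>i. i < n \<Longrightarrow> (\<Sum>j<n. P i j) = 1"
    and cols: "\<And>j. j < n \<Longrightarrow> (\<Sum>i<n. P i j) = 1"
  shows "hall_condition {..<n} (\<lambda>i. {j. j < n \<and> 0 < P i j})"
  unfolding hall_condition_def
proof (intro allI impI)
  fix S assume S: "S \<subseteq> {..<n}"
  define T where "T = (\<Union>i\<in>S. {j. j < n \<and> 0 < P i j})"
  have T: "T \<subseteq> {..<n}" unfolding T_def by auto
  have "real (card S) = (\<Sum>i\<in>S. \<Sum>j<n. P i j)"
    using rows S by (simp add: subset_eq)
  also have "\<dots> = (\<Sum>i\<in>S. \<Sum>j\<in>T. P i j)"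
  proof (rule sum.cong[OF refl])
    fix i assume "i \<in> S"
    then have "\<forall>j\<in>{..<n} - T. P i j = 0"
      using nonneg unfolding T_def by (auto simp: order_less_le)
    then show "(\<Sum>j<n. P i j) = (\<Sum>j\<in>T. P i j)"
      using sum.mono_neutral_right[OF _ T] by simp
  qed
  also have "\<dots> \<le> (\<Sum>i<n. \<Sum>j\<in>T. P i j)"
    using S nonneg by (intro sum_mono2) (auto intro: sum_nonneg)
  also have "\<dots> = (\<Sum>j\<in>T. \<Sum>i<n. P i j)"
    by (rule sum.swap)
  also have "\<dots> = real (card T)"
    using cols T by (simp add: subset_eq)
  finally show "card S \<le> card (\<Union>i\<in>S. {j. j < n \<and> 0 < P i j})"
    unfolding T_def by linarith
qed

theorem doubly_stochastic_positive_permutation: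
  fixes P :: "nat \<Rightarrow> nat \<Rightarrow> real"
  assumes "\<And>i j. 0 \<le> P i j"
    and "\<And>i. i < n \<Longrightarrow> (\<Sum>j<n. P i j) = 1"
    and "\<And>j. j < n \<Longrightarrow> (\<Sum>i<n. P i j) = 1"
  shows "\<exists>\<rho>. \<rho> permutes {..<n} \<and> (\<forall>i<n. 0 < P i (\<rho> i))"
proof -
  obtain f where f: "inj_on f {..<n}" "\<forall>i<n. f i < n \<and> 0 < P i (f i)"
    using hall_marriage[OF _ doubly_stochastic_hall_condition[OF assms]] by auto
  define \<rho> where "\<rho> = (\<lambda>i. if i < n then f i else i)"
  have "\<rho> permutes {..<n}"
    using f unfolding \<rho>_def by (intro inj_imp_permutes) (auto simp: inj_on_def)
  with f show ?thesis
    unfolding \<rho>_def by auto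
qed

lemma infsum_complex_of_real:
  "(\<Sum>\<^sub>\<infinity>x\<in>A. complex_of_real (g x)) = of_real (\<Sum>\<^sub>\<infinity>x\<in>A. g x)"
proof -
  have "(\<lambda>x. complex_of_real (g x)) summable_on A \<longleftrightarrow> g summable_on A"
    using summable_on_Re[of "\<lambda>x. complex_of_real (g x)" A] summable_on_of_real[of g A] by auto
  then show ?thesis
    by (rule infsum_bounded_linear_strong) (rule bounded_linear_of_real)
qed

lemma cocyc_uminus_uminus: "cocyc N \<theta> (- \<alpha>) (- \<alpha>) = cocyc N \<theta> \<alpha> \<alpha>"
  by (simp add: cocyc_def)

lemma cocyc_diag_mult_uminus: "cocyc N \<theta> \<alpha> \<alpha> * cocyc N \<theta> \<alpha> (- \<alpha>) = 1"
  by (simp add: cocyc_def sum_negf exp_add[symmetric])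

definition l2_sqnorm :: "nat \<Rightarrow> (mindex \<Rightarrow> complex) \<Rightarrow> real" where
  "l2_sqnorm N a = (\<Sum>\<^sub>\<infinity>\<alpha>\<in>ZN N. (cmod (a \<alpha>))\<^sup>2)"

lemma l2_sqnorm_nonneg: "0 \<le> l2_sqnorm N a"
  unfolding l2_sqnorm_def by (rule infsum_nonneg) simp

lemma l2_sqnorm_nct_zero: "l2_sqnorm N nct_zero = 0"
  by (simp add: l2_sqnorm_def nct_zero_def)

lemma nct_mult_star_origin:
  "nct_mult N \<theta> a (nct_star N \<theta> a) (\<lambda>_. 0) = of_real (l2_sqnorm N a)"
proof -
  have pointwise: "a \<alpha> * nct_star N \<theta> a (\<lambda>k. 0 - \<alpha> k) * cocyc N \<theta> \<alpha> (\<lambda>k. 0 - \<alpha> k)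
      = of_real ((cmod (a \<alpha>))\<^sup>2)" for \<alpha>
  proof -
    have "(\<lambda>k. 0 - \<alpha> k) = - \<alpha>" "(\<lambda>k. - (- \<alpha>) k) = \<alpha>" by (simp_all add: fun_Compl_def)
    then show ?thesis
      using cocyc_diag_mult_uminus[of N \<theta> \<alpha>]
      by (simp add: nct_star_def cocyc_uminus_uminus mult_ac) (simp add: complex_norm_square[symmetric])
  qed
  show ?thesis
    unfolding nct_mult_def l2_sqnorm_def infsum_complex_of_real[symmetric]
    by (rule infsum_cong) (rule pointwise)
qed

lemma nct_star_mult_origin:
  "nct_mult N \<theta> (nct_star N \<theta> a) a (\<lambda>_. 0) = of_real (l2_sqnorm N a)"
proof -
  have pointwise: "nct_star N \<theta> a \<alpha> * a (\<lambda>k. 0 - \<alpha> k) * cocyc N \<theta> \<alpha> (\<lambda>k. 0 - \<alpha> k)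
      = of_real ((cmod (a (- \<alpha>)))\<^sup>2)" for \<alpha>
  proof -
    have "(\<lambda>k. 0 - \<alpha> k) = - \<alpha>" "(\<lambda>k. - \<alpha> k) = - \<alpha>" by (simp_all add: fun_Compl_def)
    then show ?thesis
      using cocyc_diag_mult_uminus[of N \<theta> \<alpha>]
      by (simp add: nct_star_def mult_ac) (simp add: complex_norm_square[symmetric] mult.commute)
  qed
  have "nct_mult N \<theta> (nct_star N \<theta> a) a (\<lambda>_. 0)
      = of_real (\<Sum>\<^sub>\<infinity>\<alpha>\<in>ZN N. (cmod (a (- \<alpha>)))\<^sup>2)"
    unfolding nct_mult_def infsum_complex_of_real[symmetric]
    by (rule infsum_cong) (rule pointwise)
  also have "(\<Sum>\<^sub>\<infinity>\<alpha>\<in>ZN N. (cmod (a (- \<alpha>)))\<^sup>2) = l2_sqnorm N a"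
    unfolding l2_sqnorm_def
    by (rule infsum_reindex_bij_betw[where g = uminus])
       (rule bij_betwI[where g = uminus], auto simp: ZN_def)
  finally show ?thesis .
qed

lemma smooth_unitary_row_sqnorms:
  assumes "smooth_unitary N \<theta> n U" and "i < n"
  shows "(\<Sum>j<n. l2_sqnorm N (U i j)) = 1"
proof -
  have "mat_mult N \<theta> n U (mat_star N \<theta> U) i i (\<lambda>_. 0) = 1"
    using assms by (simp add: smooth_unitary_def mat_id_def nct_one_def)
  then have "(\<Sum>j<n. of_real (l2_sqnorm N (U i j)) :: complex) = 1"
    by (simp add: mat_mult_def mat_star_def nct_mult_star_origin)
  then show ?thesis
    by (metis of_real_eq_1_iff of_real_sum)
qed

lemma smooth_unitary_col_sqnorms:
  assumes "smooth_unitary N \<theta> n U" and "j < n"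
  shows "(\<Sum>i<n. l2_sqnorm N (U i j)) = 1"
proof -
  have "mat_mult N \<theta> n (mat_star N \<theta> U) U j j (\<lambda>_. 0) = 1"
    using assms by (simp add: smooth_unitary_def mat_id_def nct_one_def)
  then have "(\<Sum>i<n. of_real (l2_sqnorm N (U i j)) :: complex) = 1"
    by (simp add: mat_mult_def mat_star_def nct_star_mult_origin)
  then show ?thesis
    by (metis of_real_eq_1_iff of_real_sum)
qed

theorem mainTheorem3:
  fixes N n :: nat and \<theta> :: "nat \<Rightarrow> nat \<Rightarrow> real" and U :: nct_matrix
  assumes "\<forall>k<N. \<forall>l<N. \<theta> k l = - \<theta> l k"
    and "smooth_unitary N \<theta> n U"
  shows "\<exists>\<rho>. \<rho> permutes {..<n} \<and> (\<forall>i<n. U i (\<rho> i) \<noteq> nct_zero)"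
proof -
  obtain \<rho> where "\<rho> permutes {..<n}" and "\<forall>i<n. 0 < l2_sqnorm N (U i (\<rho> i))"
    using doubly_stochastic_positive_permutation[of "\<lambda>i j. l2_sqnorm N (U i j)" n]
      l2_sqnorm_nonneg smooth_unitary_row_sqnorms[OF assms(2)]
      smooth_unitary_col_sqnorms[OF assms(2)]
    by blast
  then show ?thesis
    by (metis l2_sqnorm_nct_zero less_irrefl)
qed

end
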